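(* Let $0<x_1<x_2<x_3\le 1$. Then there is a unique $x'\in(x_1,x_3)$ with $$\frac{x'-x_1}{x'}+\ln\frac{x_3}{x'}=\frac{x_2-x_1}{x_2}+\frac{x_3-x_2}{x_3},$$ and this $x'$ satisfies $$T_h(x_1,x')+\mathcal H(x',x_3)\le T_h(x_1,x_2)+T_h(x_2,x_3).$$
   Context: For $a,b>0$ define $$T_h(a,b):=\tfrac12\Bigl(\tfrac1a-\tfrac1b+b-a\Bigr)\Bigl(a+\tfrac1b\Bigr),\qquad \mathcal H(a,b):=\ln\frac ba+\frac14\,(b^2-a^2)-\frac14\,(b^{-2}-a^{-2}),$$ with $\ln$ the natural logarithm. (In the paper this says that two consecutive "steps" between hyperbola points with abscissae $x_1<x_2<x_3\le1$ can be replaced by one step followed by one slide with the same area contribution and no larger crown.) *)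

theory Defs
  imports Complex_Main
begin

definition T_h :: "real \<Rightarrow> real \<Rightarrow> real" where
  "T_h a b = (1/2) * (1/a - 1/b + b - a) * (a + 1/b)"

definition H_fun :: "real \<Rightarrow> real \<Rightarrow> real" where
  "H_fun a b = ln (b / a) + (1/4) * (b^2 - a^2) - (1/4) * (1/b^2 - 1/a^2)"

end

theory Submission
  imports Defs
begin

(* The left-hand side of the area equation is strictly decreasing in x' and crosses the
   right-hand side between x2 and x3, which gives existence and uniqueness.
   For the crown inequality, move the end u of the step from x' up to x3 while choosing its
   start a(u) so that step plus slide keep the area of the two steps (the area equation is
   linear in the start). At u = x3 the start is x2 and the two configurations coincide, and
   the difference of crowns has nonnegative derivative in u since a(u) <= x2 < u <= 1. *)

(* Area contributions of a step and of a slide between the hyperbola points with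
   abscissae a < b; T_h and H_fun are the corresponding crowns. *)
definition step_area :: "real \<Rightarrow> real \<Rightarrow> real" where
  "step_area a b = (b - a) / b"

definition slide_area :: "real \<Rightarrow> real \<Rightarrow> real" where
  "slide_area a b = ln (b / a)"

lemma step_area_less_slide_area:
  assumes "0 < a" "a < b"
  shows "step_area a b < slide_area a b"
  using ln_diff_less[of a b] assms
  by (simp add: step_area_def slide_area_def ln_div field_simps)

lemma step_area_less_add:
  assumes "0 < a" "a < b" "b < c"
  shows "step_area a c < step_area a b + step_area b c"
proof -
  have "(b - a) / c < (b - a) / b"
    using assms by (simp add: divide_strict_left_mono)
  moreover have "step_area a c = (b - a) / c + step_area b c"
    using assms by (simp add: step_area_def field_simps)
  ultimately show ?thesis
    by (simp add: step_area_def)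
qed

lemma step_slide_area_strict_antimono:
  assumes "0 < a" "a < x" "x < y" "0 < c"
  shows "step_area a y + slide_area y c < step_area a x + slide_area x c"
proof -
  have "(y - x) / y \<le> ln y - ln x"
    using ln_diff_le[of x y] assms by (simp add: field_simps)
  moreover have "a / x * ((y - x) / y) < 1 * ((y - x) / y)"
    using assms by (intro mult_strict_right_mono) auto
  moreover have "step_area a x + slide_area x c - (step_area a y + slide_area y c)
      = (ln y - ln x) - a / x * ((y - x) / y)"
    using assms by (simp add: step_area_def slide_area_def ln_div field_simps)
  ultimately show ?thesis
    by linarith
qed

lemma step_slide_split_gt_middle:
  assumes "0 < a" "a < b" "b < c" "a < x"
    and "step_area a x + slide_area x c = step_area a b + step_area b c"
  shows "b < x"
proof (rule ccontr)
  assume "\<not> b < x"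
  then have "step_area a b + slide_area b c \<le> step_area a x + slide_area x c"
    using step_slide_area_strict_antimono[of a x b c] assms by fastforce
  then show False
    using step_area_less_slide_area[of b c] assms by simp
qed

lemma ex1_step_slide_split:
  assumes "0 < a" "a < b" "b < c"
  shows "\<exists>!x. a < x \<and> x < c \<and>
           step_area a x + slide_area x c = step_area a b + step_area b c"
proof -
  let ?f = "\<lambda>x. step_area a x + slide_area x c"
  let ?R = "step_area a b + step_area b c"
  have "?f c < ?R"
    using step_area_less_add[OF assms] assms by (simp add: slide_area_def)
  moreover have "?R < ?f b"
    using step_area_less_slide_area[of b c] assms by simp
  moreover have "continuous_on {b..c} ?f"
    using assms unfolding step_area_def slide_area_def by (intro continuous_intros) auto
  ultimately obtain x where x: "b \<le> x" "x \<le> c" "?f x = ?R"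
    using IVT2'[of ?f c ?R b] assms by force
  then have "b < x" "x < c"
    using \<open>?f c < ?R\<close> \<open>?R < ?f b\<close> by (auto simp: order.order_iff_strict)
  moreover have "y = x" if "a < y" "?f y = ?R" for y
    using step_slide_area_strict_antimono[of a x y c] step_slide_area_strict_antimono[of a y x c]
      that x \<open>b < x\<close> assms by (cases y x rule: linorder_cases) auto
  ultimately show ?thesis
    using x assms by (intro ex1I[of _ x]) auto
qed

definition balancing_start :: "real \<Rightarrow> real \<Rightarrow> real \<Rightarrow> real" where
  "balancing_start b c u = b * u * (ln (u / c) + 1 - b / c) / (u - b)"

lemma balancing_start_iff:
  assumes "0 < b" "b < u" "0 < c"
  shows "step_area a u + slide_area u c = step_area a b + step_area b c
         \<longleftrightarrow> balancing_start b c u = a"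
  using assms
  by (simp add: step_area_def slide_area_def balancing_start_def ln_div field_simps)
    (auto simp: algebra_simps)

lemma balancing_start_at_end:
  assumes "0 < b" "b < c"
  shows "balancing_start b c c = b"
  using assms by (simp add: balancing_start_def field_simps)

lemma balancing_start_le:
  assumes "0 < b" "b < u" "u \<le> c"
  shows "balancing_start b c u \<le> b"
proof -
  have "ln (u / c) + 1 - b / c \<le> (u - b) / c"
    using ln_le_minus_one[of "u / c"] assms by (simp add: diff_divide_distrib)
  also have "\<dots> \<le> (u - b) / u"
    using assms by (intro divide_left_mono) auto
  finally have "u * (ln (u / c) + 1 - b / c) \<le> u - b"
    using assms by (simp add: field_simps)
  then show ?thesis
    using assms by (simp add: balancing_start_def pos_divide_le_eq mult_left_mono mult.assoc)
qed

lemma has_real_derivative_balancing_start: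
  assumes "0 < b" "b < u" "0 < c"
  shows "(balancing_start b c has_real_derivative
           b * (u - balancing_start b c u) / (u * (u - b))) (at u)"
proof -
  have "u - b \<noteq> 0" "u \<noteq> 0"
    using assms by auto
  then show ?thesis
    unfolding balancing_start_def using assms
    by (auto intro!: derivative_eq_intros simp: divide_simps) (simp add: algebra_simps)
qed

lemma balancing_start_mono:
  assumes "0 < b" "b < u" "u \<le> v" "v \<le> c"
  shows "balancing_start b c u \<le> balancing_start b c v"
proof (rule DERIV_nonneg_imp_nondecreasing[OF \<open>u \<le> v\<close>])
  fix x assume "u \<le> x" "x \<le> v"
  then have "b < x" "x \<le> c"
    using assms by auto
  then have "0 \<le> b * (x - balancing_start b c x) / (x * (x - b))"
    using balancing_start_le[of b x c] assms by simp
  then show "\<exists>y. (balancing_start b c has_real_derivative y) (at x) \<and> 0 \<le> y"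
    using has_real_derivative_balancing_start[of b x c] \<open>b < x\<close> \<open>x \<le> c\<close> assms by auto
qed

lemma has_real_derivative_crown_gap:
  fixes a :: "real \<Rightarrow> real"
  assumes "0 < b" "b < u" "0 < c" "0 < a u" "(a has_real_derivative D) (at u)"
    and "D * (u - b) * u = b * (u - a u)"
  shows "((\<lambda>u. T_h (a u) u + H_fun u c - T_h (a u) b - T_h b c) has_real_derivative
           (u - a u) / u * ((u - a u) / (2 * (a u)^2 * u^2) + (b - u) / 2)) (at u)"
proof -
  have "u \<noteq> 0" "a u \<noteq> 0" "b \<noteq> 0"
    using assms by auto
  then show ?thesis
    unfolding T_h_def H_fun_def using assms
    by (auto intro!: derivative_eq_intros) (simp add: divide_simps, algebra)
qed

lemma crown_gap_slope_nonneg: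
  fixes p b u :: real
  assumes "0 < p" "p \<le> b" "b < u" "u \<le> 1"
  shows "0 \<le> (u - p) / u * ((u - p) / (2 * p^2 * u^2) + (b - u) / 2)"
proof -
  have "p * u \<le> 1"
    using assms by (intro mult_le_one) auto
  then have "(p * u)^2 \<le> 1"
    using assms by (simp add: power_le_one)
  then have "(u - p) / 2 \<le> (u - p) / (2 * p^2 * u^2)"
    using assms by (intro divide_left_mono) (auto simp: power_mult_distrib)
  moreover have "0 \<le> (u - p) / 2 + (b - u) / 2"
    using assms by (simp add: field_simps)
  ultimately have "0 \<le> (u - p) / (2 * p^2 * u^2) + (b - u) / 2"
    by linarith
  then show ?thesis
    using assms by simp
qed

lemma step_slide_crown_le:
  assumes "0 < a" "a < b" "b < x" "x < c" "c \<le> 1"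
    and area: "step_area a x + slide_area x c = step_area a b + step_area b c"
  shows "T_h a x + H_fun x c \<le> T_h a b + T_h b c"
proof -
  let ?s = "balancing_start b c"
  define G where "G u = T_h (?s u) u + H_fun u c - T_h (?s u) b - T_h b c" for u
  have s_x: "?s x = a"
    using area balancing_start_iff[of b x c a] assms by simp
  have "G x \<le> G c"
  proof (rule DERIV_nonneg_imp_nondecreasing[of x c G])
    fix u assume u: "x \<le> u" "u \<le> c"
    have s_bounds: "0 < ?s u" "?s u \<le> b"
      using balancing_start_mono[of b x u c] balancing_start_le[of b u c] s_x u assms by auto
    have "(G has_real_derivative
            (u - ?s u) / u * ((u - ?s u) / (2 * (?s u)^2 * u^2) + (b - u) / 2)) (at u)"
      unfolding G_def
      using has_real_derivative_balancing_start[of b u c] s_bounds u assms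
      by (intro has_real_derivative_crown_gap) (auto simp: field_simps)
    moreover have "0 \<le> (u - ?s u) / u * ((u - ?s u) / (2 * (?s u)^2 * u^2) + (b - u) / 2)"
      using s_bounds u assms by (intro crown_gap_slope_nonneg) auto
    ultimately show "\<exists>y. (G has_real_derivative y) (at u) \<and> 0 \<le> y"
      by blast
  qed (use assms in auto)
  moreover have "G c = 0"
    using balancing_start_at_end[of b c] assms by (simp add: G_def T_h_def H_fun_def)
  ultimately show ?thesis
    by (simp add: G_def s_x)
qed

theorem mainTheorem3:
  fixes x1 x2 x3 :: real
  assumes "0 < x1" and "x1 < x2" and "x2 < x3" and "x3 \<le> 1"
  shows "(\<exists>!x'. x1 < x' \<and> x' < x3 \<and>
            (x' - x1) / x' + ln (x3 / x') = (x2 - x1) / x2 + (x3 - x2) / x3)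
       \<and> (\<forall>x'. x1 < x' \<and> x' < x3 \<and>
            (x' - x1) / x' + ln (x3 / x') = (x2 - x1) / x2 + (x3 - x2) / x3
            \<longrightarrow> T_h x1 x' + H_fun x' x3 \<le> T_h x1 x2 + T_h x2 x3)"
  using ex1_step_slide_split[OF assms(1-3)]
    step_slide_split_gt_middle[OF assms(1-3)] step_slide_crown_le[OF assms(1,2) _ _ assms(4)]
  unfolding step_area_def slide_area_def by blast

end
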